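(* Let $d\ge1$. There exist $C>0$ and $N\in\mathbb{N}$ such that $\mathrm{ex}(n,\mathcal{F}_d)\ge C\,n^{\,d+1-\frac{2(d+1)}{3^{d+1}-1}}$ for all $n\ge N$.
   Context: A $k$-graph is a hypergraph whose edges are all $k$-element subsets of a finite vertex set. A $k$-graph is $\mathcal{F}$-free if it has no subhypergraph isomorphic to a member of $\mathcal{F}$; $\mathrm{ex}(n,\mathcal{F})$ is the maximum number of edges of an $\mathcal{F}$-free $k$-graph on $n$ vertices. A simplicial complex is a nonempty family of subsets of a finite vertex set closed under subsets; $\dim F=|F|-1$. A complex $K$ with vertex set identified with a subset of $[n]$ is nice on $[n]$ if for every $F\subseteq[n]$ exactly one of $F$, $[n]\setminus F$ lies in $K$. The join $K_1*K_2$ has vertex set $V(K_1)\sqcup V(K_2)$ and simplices $F_1\sqcup F_2$ with $F_i\in K_i$. For a $d$-dimensional complex $K$, $(K)^d$ is the $(d+1)$-graph on $V(K)$ whose edges are the $d$-simplices of $K$. $\mathcal{F}_d$ is the family of $(d+1)$-graphs $(K_1*\cdots*K_s)^d$ where $s\ge1$, each $K_i$ is nice on $[n_i]$, $\dim(K_1*\cdots*K_s)=d$, and $n_1+\cdots+n_s=2d+s+2$. *)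

theory Defs
  imports Complex_Main
begin

definition is_kgraph :: "nat \<Rightarrow> 'a set \<times> 'a set set \<Rightarrow> bool" where
  "is_kgraph k G \<longleftrightarrow> finite (fst G) \<and> (\<forall>e\<in>snd G. e \<subseteq> fst G \<and> card e = k)"

definition contains_copy :: "'a set \<times> 'a set set \<Rightarrow> 'b set \<times> 'b set set \<Rightarrow> bool" where
  "contains_copy G H \<longleftrightarrow>
     (\<exists>f. inj_on f (fst H) \<and> f ` fst H \<subseteq> fst G \<and> (\<forall>e\<in>snd H. f ` e \<in> snd G))"

definition family_free :: "'a set \<times> 'a set set \<Rightarrow> ('b set \<times> 'b set set) set \<Rightarrow> bool" where
  "family_free G \<F> \<longleftrightarrow> (\<forall>H\<in>\<F>. \<not> contains_copy G H)"

definition ex_num :: "nat \<Rightarrow> nat \<Rightarrow> ('b set \<times> 'b set set) set \<Rightarrow> nat" where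
  "ex_num k n \<F> = Max {card E | E. is_kgraph k ({0..<n}, E) \<and> family_free ({0..<n}, E) \<F>}"

definition simplicial_complex :: "'a set \<Rightarrow> 'a set set \<Rightarrow> bool" where
  "simplicial_complex V K \<longleftrightarrow> K \<noteq> {} \<and> K \<subseteq> Pow V \<and> (\<forall>F\<in>K. \<forall>G. G \<subseteq> F \<longrightarrow> G \<in> K)"

definition nice :: "nat \<Rightarrow> nat set set \<Rightarrow> bool" where
  "nice n K \<longleftrightarrow> simplicial_complex {0..<n} K \<and>
     (\<forall>F. F \<subseteq> {0..<n} \<longrightarrow> ((F \<in> K) \<noteq> ({0..<n} - F \<in> K)))"

text \<open>Join K_0 * ... * K_(s-1), where K_i has vertex set {0..<ns i};
  the disjoint union of vertex sets is realised as pairs (i, j).\<close>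

definition join_verts :: "nat \<Rightarrow> (nat \<Rightarrow> nat) \<Rightarrow> (nat \<times> nat) set" where
  "join_verts s ns = {(i, j). i < s \<and> j < ns i}"

definition join_cx :: "nat \<Rightarrow> (nat \<Rightarrow> nat) \<Rightarrow> (nat \<Rightarrow> nat set set) \<Rightarrow> (nat \<times> nat) set set" where
  "join_cx s ns Ks = {F. F \<subseteq> join_verts s ns \<and> (\<forall>i<s. {j. (i, j) \<in> F} \<in> Ks i)}"

definition cx_dim :: "'a set set \<Rightarrow> nat" where
  "cx_dim K = Max (card ` K) - 1"

definition skel :: "nat \<Rightarrow> 'a set \<Rightarrow> 'a set set \<Rightarrow> 'a set \<times> 'a set set" where
  "skel d V K = (V, {F \<in> K. card F = d + 1})"

definition F_fam :: "nat \<Rightarrow> ((nat \<times> nat) set \<times> (nat \<times> nat) set set) set" where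
  "F_fam d = {skel d (join_verts s ns) (join_cx s ns Ks) | s ns Ks.
      s \<ge> 1 \<and> (\<forall>i<s. nice (ns i) (Ks i)) \<and>
      cx_dim (join_cx s ns Ks) = d \<and> (\<Sum>i<s. ns i) = 2 * d + s + 2}"

end

theory Submission
  imports Defs "HOL-Library.FuncSet"
begin

text \<open>Deletion method. Split \<open>k * m\<close> vertices, \<open>k = d + 1\<close>, into \<open>k\<close> blocks of size \<open>m\<close>
  and call a copy of the complete \<open>k\<close>-partite \<open>k\<close>-graph with parts of size 3 inside the
  blocks a box. A random set of about \<open>m\<^sup>k\<^sup>-\<^sup>\<alpha>\<close> transversal edges, \<open>\<alpha> = 2k/(3\<^sup>k - 1)\<close>,
  spans on average at most half as many boxes as it has edges; deleting one edge from every
  box leaves a box-free \<open>k\<close>-graph with \<open>\<Omega>(m\<^sup>k\<^sup>-\<^sup>\<alpha>)\<close> edges. A box-free transversal \<open>k\<close>-graph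
  is \<open>\<F>\<^sub>d\<close>-free: the blocks of an embedding of \<open>(K\<^sub>1 * \<dots> * K\<^sub>s)\<^sup>d\<close> properly colour its top
  simplices with \<open>k\<close> colours, which forces \<open>d + 1\<close> of the \<open>K\<^sub>i\<close> to be three isolated
  points and the others to have no vertices in any simplex, so the top simplices form a box.\<close>

definition block :: "nat \<Rightarrow> nat \<Rightarrow> nat set" where
  "block m j = {j * m..<j * m + m}"

lemma mem_block_iff: "x \<in> block m j \<longleftrightarrow> 0 < m \<and> x div m = j"
proof
  assume x: "x \<in> block m j"
  then have "0 < m" by (auto simp: block_def)
  moreover have "x div m = j"
    using x by (intro div_nat_eqI) (auto simp: block_def algebra_simps)
  ultimately show "0 < m \<and> x div m = j" ..
next
  assume "0 < m \<and> x div m = j"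
  then have "j * m + x mod m = x" "x mod m < m"
    using div_mult_mod_eq[of x m] by auto
  then show "x \<in> block m j" unfolding block_def atLeastLessThan_iff by linarith
qed

lemma card_block [simp]: "card (block m j) = m"
  by (simp add: block_def)

text \<open>Vertex \<open>x\<close> lies in block \<open>x div m\<close>; the transversals are the edges of the complete
  \<open>k\<close>-partite \<open>k\<close>-graph on the blocks, and a box \<open>T\<close> picks three vertices in each block.\<close>

definition transversals :: "nat \<Rightarrow> nat \<Rightarrow> nat set set" where
  "transversals k m = {e. e \<subseteq> {0..<k * m} \<and> (\<forall>j<k. card {x \<in> e. x div m = j} = 1)}"

definition boxes :: "nat \<Rightarrow> nat \<Rightarrow> (nat \<Rightarrow> nat set) set" where
  "boxes k m = (\<Pi>\<^sub>E j\<in>{..<k}. {S. S \<subseteq> block m j \<and> card S = 3})"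

definition box_edges :: "nat \<Rightarrow> nat \<Rightarrow> (nat \<Rightarrow> nat set) \<Rightarrow> nat set set" where
  "box_edges k m T = {e \<in> transversals k m. e \<subseteq> (\<Union>j<k. T j)}"

definition box_free :: "nat \<Rightarrow> nat \<Rightarrow> nat set set \<Rightarrow> bool" where
  "box_free k m E \<longleftrightarrow> (\<forall>T\<in>boxes k m. \<not> box_edges k m T \<subseteq> E)"

lemma finite_transversals: "finite (transversals k m)"
  by (rule finite_subset[of _ "Pow {0..<k * m}"]) (auto simp: transversals_def)

lemma transversal_bij_betw_div:
  assumes "e \<in> transversals k m"
  shows "bij_betw (\<lambda>x. x div m) e {..<k}"
proof -
  have sub: "e \<subseteq> {0..<k * m}" and one: "\<And>j. j < k \<Longrightarrow> card {x \<in> e. x div m = j} = 1"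
    using assms by (auto simp: transversals_def)
  have less: "x div m < k" if "x \<in> e" for x
    using sub that by (meson atLeastLessThan_iff less_mult_imp_div_less subsetD)
  show ?thesis unfolding bij_betw_def
  proof (intro conjI inj_onI subset_antisym subsetI)
    fix x y assume xy: "x \<in> e" "y \<in> e" "x div m = y div m"
    obtain z where z: "{u \<in> e. u div m = x div m} = {z}"
      using one[OF less[OF \<open>x \<in> e\<close>]] by (rule card_1_singletonE)
    have "x \<in> {u \<in> e. u div m = x div m}" "y \<in> {u \<in> e. u div m = x div m}"
      using xy by auto
    then show "x = y" unfolding z by simp
  next
    fix j assume "j \<in> {..<k}"
    then have "{x \<in> e. x div m = j} \<noteq> {}" using one by (metis card.empty lessThan_iff zero_neq_one)
    then show "j \<in> (\<lambda>x. x div m) ` e" by blast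
  qed (use less in auto)
qed

lemma card_transversal: "e \<in> transversals k m \<Longrightarrow> card e = k"
  using bij_betw_same_card[OF transversal_bij_betw_div] by simp

lemma image_PiE_in_transversals:
  assumes "\<And>j. j < k \<Longrightarrow> B j \<subseteq> block m j" and "g \<in> (\<Pi>\<^sub>E j\<in>{..<k}. B j)"
  shows "g ` {..<k} \<in> transversals k m"
proof -
  have block: "g j \<in> block m j" if "j < k" for j
    using assms that by (auto simp: PiE_iff)
  then have g: "g j div m = j" if "j < k" for j
    using that by (simp add: mem_block_iff)
  have "g j < k * m" if "j < k" for j
  proof -
    have "g j < j * m + m" using block[OF that] by (simp add: block_def)
    also have "\<dots> \<le> k * m" using that by (metis add.commute mult_Suc mult_le_mono1 Suc_leI)
    finally show ?thesis .
  qed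
  moreover have "{x \<in> g ` {..<k}. x div m = j} = {g j}" if "j < k" for j
    using g that by auto
  ultimately show ?thesis by (auto simp: transversals_def)
qed

lemma prod_card_le_card_transversals_within:
  assumes "\<And>j. j < k \<Longrightarrow> B j \<subseteq> block m j"
  shows "(\<Prod>j<k. card (B j)) \<le> card {e \<in> transversals k m. e \<subseteq> (\<Union>j<k. B j)}"
proof -
  have "inj_on (\<lambda>g. g ` {..<k}) (\<Pi>\<^sub>E j\<in>{..<k}. B j)"
  proof (rule inj_onI)
    fix g g' assume g: "g \<in> (\<Pi>\<^sub>E j\<in>{..<k}. B j)" and g': "g' \<in> (\<Pi>\<^sub>E j\<in>{..<k}. B j)"
      and eq: "g ` {..<k} = g' ` {..<k}"
    have colour: "h j div m = j" if "h \<in> (\<Pi>\<^sub>E j\<in>{..<k}. B j)" "j < k" for h j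
    proof -
      have "h j \<in> block m j" using assms that by (auto simp: PiE_iff)
      then show ?thesis by (simp add: mem_block_iff)
    qed
    show "g = g'"
    proof (rule PiE_ext[OF g g'])
      fix j assume j: "j \<in> {..<k}"
      then have "g j \<in> g' ` {..<k}" using eq by blast
      then obtain j' where j': "j' < k" "g j = g' j'" by blast
      have "j' = j" using colour[OF g] colour[OF g' j'(1)] j j'(2) by force
      then show "g j = g' j" using j'(2) by simp
    qed
  qed
  then have "(\<Prod>j<k. card (B j)) = card ((\<lambda>g. g ` {..<k}) ` (\<Pi>\<^sub>E j\<in>{..<k}. B j))"
    by (simp add: card_image card_PiE)
  also have "\<dots> \<le> card {e \<in> transversals k m. e \<subseteq> (\<Union>j<k. B j)}"
    using image_PiE_in_transversals[OF assms]
    by (intro card_mono) (auto simp: finite_transversals PiE_iff)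
  finally show ?thesis .
qed

lemma card_transversals_ge: "m ^ k \<le> card (transversals k m)"
proof -
  have "m ^ k = (\<Prod>j<k. card (block m j))" by simp
  also have "\<dots> \<le> card {e \<in> transversals k m. e \<subseteq> (\<Union>j<k. block m j)}"
    by (rule prod_card_le_card_transversals_within) simp
  also have "\<dots> \<le> card (transversals k m)"
    by (intro card_mono finite_transversals) auto
  finally show ?thesis .
qed

lemma card_box_edges_ge:
  assumes "T \<in> boxes k m"
  shows "3 ^ k \<le> card (box_edges k m T)"
proof -
  have "3 ^ k = (\<Prod>j<k. card (T j))" using assms by (simp add: boxes_def PiE_iff)
  also have "\<dots> \<le> card (box_edges k m T)"
    unfolding box_edges_def
    by (rule prod_card_le_card_transversals_within) (use assms in \<open>auto simp: boxes_def\<close>)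
  finally show ?thesis .
qed

lemma box_edges_subset: "box_edges k m T \<subseteq> transversals k m"
  by (auto simp: box_edges_def)

lemma finite_boxes: "finite (boxes k m)"
  unfolding boxes_def
proof (rule finite_PiE)
  show "finite {S. S \<subseteq> block m j \<and> card S = 3}" for j
    by (rule finite_subset[of _ "Pow (block m j)"]) (auto simp: block_def)
qed simp

lemma card_boxes_le: "card (boxes k m) \<le> m ^ (3 * k)"
proof -
  have "card (boxes k m) = (\<Prod>j<k. card {S. S \<subseteq> block m j \<and> card S = 3})"
    by (simp add: boxes_def card_PiE)
  also have "\<dots> = (m choose 3) ^ k"
    by (simp add: n_subsets block_def)
  also have "\<dots> \<le> (m ^ 3) ^ k"
    using binomial_fact_pow[of m 3] by (intro power_mono) (simp_all add: fact_numeral)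
  also have "\<dots> = m ^ (3 * k)" by (simp add: power_mult)
  finally show ?thesis .
qed

lemma card_supersets_with_card:
  assumes "finite P" "B \<subseteq> P" "card B \<le> M"
  shows "card {E. E \<subseteq> P \<and> card E = M \<and> B \<subseteq> E} = (card P - card B) choose (M - card B)"
proof -
  have fin: "finite B" using assms finite_subset by blast
  have "bij_betw (\<lambda>E. E - B) {E. E \<subseteq> P \<and> card E = M \<and> B \<subseteq> E} {E. E \<subseteq> P - B \<and> card E = M - card B}"
  proof (rule bij_betw_byWitness[where f' = "\<lambda>E. E \<union> B"])
    show "(\<lambda>E. E - B) ` {E. E \<subseteq> P \<and> card E = M \<and> B \<subseteq> E} \<subseteq> {E. E \<subseteq> P - B \<and> card E = M - card B}"
      using fin by (auto simp: card_Diff_subset)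
    show "(\<lambda>E. E \<union> B) ` {E. E \<subseteq> P - B \<and> card E = M - card B} \<subseteq> {E. E \<subseteq> P \<and> card E = M \<and> B \<subseteq> E}"
    proof clarify
      fix E assume E: "E \<subseteq> P - B" "card E = M - card B"
      then have "card (E \<union> B) = card E + card B"
        using assms(1) fin by (intro card_Un_disjoint) (auto dest: finite_subset)
      then show "E \<union> B \<subseteq> P \<and> card (E \<union> B) = M \<and> B \<subseteq> E \<union> B"
        using E assms by auto
    qed
  qed auto
  then have "card {E. E \<subseteq> P \<and> card E = M \<and> B \<subseteq> E} = card (P - B) choose (M - card B)"
    using assms(1) by (simp add: bij_betw_same_card n_subsets)
  also have "card (P - B) = card P - card B" using fin assms(2) by (rule card_Diff_subset)
  finally show ?thesis .
qed

lemma binomial_diff_le_ratio_pow: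
  "b \<le> M \<Longrightarrow> M \<le> N \<Longrightarrow>
   real ((N - b) choose (M - b)) \<le> (real M / real N) ^ b * real (N choose M)"
proof (induction b arbitrary: M N)
  case 0 then show ?case by simp
next
  case (Suc b)
  obtain M' N' where MN: "M = Suc M'" "N = Suc N'" "b \<le> M'" "M' \<le> N'"
    using Suc.prems by (cases M; cases N) auto
  have "real (Suc N') * real (N' choose M') = real (Suc N' choose Suc M') * real (Suc M')"
    using Suc_times_binomial_eq[of N' M'] by (metis of_nat_mult)
  then have step: "real (N' choose M') = real M / real N * real (N choose M)"
    unfolding MN(1,2) by (simp add: field_simps)
  have "real M' / real N' \<le> real M / real N" if "0 < N'"
    using that MN by (simp add: field_simps)
  then have ratio: "(real M' / real N') ^ b \<le> (real M / real N) ^ b"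
    using MN by (cases "N' = 0") (auto intro: power_mono)
  have "real ((N - Suc b) choose (M - Suc b)) = real ((N' - b) choose (M' - b))"
    using MN by simp
  also have "\<dots> \<le> (real M' / real N') ^ b * real (N' choose M')"
    using Suc.IH MN by blast
  also have "\<dots> \<le> (real M / real N) ^ b * real (N' choose M')"
    by (intro mult_right_mono ratio) auto
  also have "\<dots> = (real M / real N) ^ Suc b * real (N choose M)"
    unfolding step by simp
  finally show ?case .
qed

lemma card_supersets_le:
  assumes "finite P" "B \<subseteq> P" "r \<le> card B" "M \<le> card P"
  shows "real (card {E. E \<subseteq> P \<and> card E = M \<and> B \<subseteq> E})
    \<le> (real M / real (card P)) ^ r * real (card P choose M)"
proof (cases "card B \<le> M")
  case False
  then have empty: "{E. E \<subseteq> P \<and> card E = M \<and> B \<subseteq> E} = {}"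
    using assms(1) by (metis (mono_tags, lifting) Collect_empty_eq card_mono finite_subset)
  show ?thesis unfolding empty by simp
next
  case True
  have "real (card {E. E \<subseteq> P \<and> card E = M \<and> B \<subseteq> E}) = real ((card P - card B) choose (M - card B))"
    by (simp add: card_supersets_with_card assms True)
  also have "\<dots> \<le> (real M / real (card P)) ^ card B * real (card P choose M)"
    by (rule binomial_diff_le_ratio_pow[OF True assms(4)])
  also have "\<dots> \<le> (real M / real (card P)) ^ r * real (card P choose M)"
    using assms(4) by (intro mult_right_mono power_decreasing assms(3)) (auto simp: divide_le_eq_1)
  finally show ?thesis .
qed

lemma exists_ge_average:
  fixes f :: "'a \<Rightarrow> real"
  assumes "finite S" "S \<noteq> {}" "real (card S) * a \<le> sum f S"
  shows "\<exists>x\<in>S. a \<le> f x"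
proof (rule ccontr)
  assume "\<not> ?thesis"
  then have "sum f S < sum (\<lambda>_. a) S" using assms by (intro sum_strict_mono) auto
  then show False using assms by simp
qed

definition box_count :: "nat \<Rightarrow> nat \<Rightarrow> nat set set \<Rightarrow> nat" where
  "box_count k m E = card {T \<in> boxes k m. box_edges k m T \<subseteq> E}"

text \<open>First moment: a uniformly random \<open>M\<close>-subset of the \<open>N\<close> transversals contains a
  fixed box with probability at most \<open>(M/N)^(3^k)\<close>.\<close>

lemma exists_subset_few_boxes:
  assumes "M \<le> card (transversals k m)"
  defines "q \<equiv> real M / real (card (transversals k m))"
  shows "\<exists>E \<subseteq> transversals k m. card E = M \<and>
    real M - real (card (boxes k m)) * q ^ 3 ^ k \<le> real (card E) - real (box_count k m E)"
proof -
  let ?P = "transversals k m"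
  define S where "S = {E. E \<subseteq> ?P \<and> card E = M}"
  have fin_S: "finite S" by (auto simp: S_def finite_transversals)
  have card_S: "card S = card ?P choose M"
    by (simp add: S_def n_subsets finite_transversals)
  then have "S \<noteq> {}" using assms(1) by (metis card.empty zero_less_binomial less_irrefl)
  have "(\<Sum>E\<in>S. real (box_count k m E))
      = (\<Sum>E\<in>S. \<Sum>T\<in>boxes k m. of_bool (box_edges k m T \<subseteq> E))"
    using finite_boxes by (simp add: box_count_def Int_def)
  also have "\<dots> = (\<Sum>T\<in>boxes k m. \<Sum>E\<in>S. of_bool (box_edges k m T \<subseteq> E))"
    by (rule sum.swap)
  also have "\<dots> = (\<Sum>T\<in>boxes k m. real (card {E. E \<subseteq> ?P \<and> card E = M \<and> box_edges k m T \<subseteq> E}))"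
    using fin_S by (intro sum.cong refl) (simp add: S_def Int_def conj_assoc)
  also have "\<dots> \<le> (\<Sum>T\<in>boxes k m. q ^ 3 ^ k * real (card ?P choose M))"
    unfolding q_def
    by (intro sum_mono card_supersets_le finite_transversals box_edges_subset
        card_box_edges_ge assms(1))
  also have "\<dots> = real (card S) * (real (card (boxes k m)) * q ^ 3 ^ k)"
    using card_S by simp
  finally have "real (card S) * (real M - real (card (boxes k m)) * q ^ 3 ^ k)
      \<le> (\<Sum>E\<in>S. real (card E) - real (box_count k m E))"
    by (simp add: S_def sum_subtractf right_diff_distrib)
  then show ?thesis using exists_ge_average[OF fin_S \<open>S \<noteq> {}\<close>] by (auto simp: S_def)
qed

lemma delete_boxes:
  assumes "E \<subseteq> transversals k m"
  shows "\<exists>E' \<subseteq> E. box_free k m E' \<and> card E - box_count k m E \<le> card E'"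
proof -
  define full where "full = {T \<in> boxes k m. box_edges k m T \<subseteq> E}"
  define pick where "pick T = (SOME e. e \<in> box_edges k m T)" for T
  have pick: "pick T \<in> box_edges k m T" if "T \<in> boxes k m" for T
  proof -
    have "box_edges k m T \<noteq> {}"
      using card_box_edges_ge[OF that] by (metis card.empty le_zero_eq power_not_zero zero_neq_numeral)
    then show ?thesis unfolding pick_def by (simp add: some_in_eq)
  qed
  define E' where "E' = E - pick ` full"
  have "finite full" by (simp add: full_def finite_boxes)
  then have "card E - card (pick ` full) \<le> card E'"
    unfolding E'_def by (intro diff_card_le_card_Diff) simp
  moreover have "card (pick ` full) \<le> card full" using \<open>finite full\<close> by (rule card_image_le)
  ultimately have "card E - box_count k m E \<le> card E'"
    unfolding box_count_def full_def by linarith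
  moreover have "box_free k m E'"
    unfolding box_free_def
  proof (intro ballI notI)
    fix T assume T: "T \<in> boxes k m" and sub: "box_edges k m T \<subseteq> E'"
    then have "T \<in> full" unfolding full_def E'_def by blast
    then have "pick T \<notin> E'" unfolding E'_def by blast
    with sub pick[OF T] show False by blast
  qed
  ultimately show ?thesis unfolding E'_def by blast
qed

lemma exists_box_free_of_density:
  assumes "0 < m" "0 < p" "p \<le> 1"
    and sparse: "real m ^ (3 * k) * p ^ (3 ^ k - 1) \<le> real m ^ k / 2"
  shows "\<exists>E \<subseteq> transversals k m. box_free k m E \<and> (real m ^ k * p - 1) / 2 \<le> real (card E)"
proof -
  define N where "N = card (transversals k m)"
  define M where "M = nat \<lfloor>real N * p\<rfloor>"
  define q where "q = real M / real N"
  have N: "real m ^ k \<le> real N"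
    unfolding N_def by (metis card_transversals_ge of_nat_le_iff of_nat_power)
  moreover have "0 < real m ^ k" using assms(1) by simp
  ultimately have N_pos: "0 < real N" by linarith
  have "0 \<le> real N * p" using assms(2) N_pos by simp
  then have "real M = of_int \<lfloor>real N * p\<rfloor>" unfolding M_def by simp
  then have M: "real N * p - 1 \<le> real M" "real M \<le> real N * p"
    using of_int_floor_le[of "real N * p"] real_of_int_floor_add_one_gt[of "real N * p"] by linarith+
  then have "M \<le> N" using assms(3) N_pos by (metis mult_left_le of_nat_0_le_iff order_trans of_nat_le_iff)
  then obtain E where E: "E \<subseteq> transversals k m"
    "real M - real (card (boxes k m)) * q ^ 3 ^ k \<le> real (card E) - real (box_count k m E)"
    using exists_subset_few_boxes[of M k m] unfolding N_def q_def by auto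
  obtain E' where E': "E' \<subseteq> E" "box_free k m E'" "card E - box_count k m E \<le> card E'"
    using delete_boxes[OF E(1)] by blast
  have q: "0 \<le> q" "q \<le> p" using M N_pos by (auto simp: q_def divide_le_eq mult.commute)
  have "real (card (boxes k m)) * q ^ 3 ^ k \<le> real m ^ (3 * k) * (p ^ (3 ^ k - 1) * q)"
  proof (intro mult_mono)
    show "real (card (boxes k m)) \<le> real m ^ (3 * k)"
      by (metis card_boxes_le of_nat_le_iff of_nat_power)
    have "q ^ 3 ^ k = q ^ (3 ^ k - 1) * q" by (metis power_minus_mult zero_less_numeral zero_less_power)
    also have "\<dots> \<le> p ^ (3 ^ k - 1) * q" using q by (intro mult_right_mono power_mono) auto
    finally show "q ^ 3 ^ k \<le> p ^ (3 ^ k - 1) * q" .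
  qed (use q in auto)
  also have "\<dots> \<le> real m ^ k / 2 * q"
    using mult_right_mono[OF sparse q(1)] by (simp only: mult.assoc)
  also have "\<dots> \<le> real N / 2 * q" using N q by (intro mult_right_mono) auto
  also have "\<dots> = real M / 2" using N_pos by (simp add: q_def)
  finally have "real M / 2 \<le> real (card E')" using E(2) E'(3) by linarith
  moreover have "real m ^ k * p \<le> real N * p" using N assms(2) by simp
  ultimately show ?thesis using E(1) E'(1,2) M(1) by (intro exI[of _ E']) auto
qed

lemma density_exponent_le:
  assumes "2 \<le> k"
  shows "2 * real k / (3 ^ k - 1) \<le> real k - 1"
proof -
  have "(3::real) ^ 2 \<le> 3 ^ k" using assms by (intro power_increasing) auto
  then have three_pow: "8 \<le> (3::real) ^ k - 1" by simp
  have "2 * real k \<le> (real k - 1) * 8" using assms by simp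
  also have "\<dots> \<le> (real k - 1) * (3 ^ k - 1)" using assms three_pow by (intro mult_left_mono) auto
  finally show ?thesis using three_pow by (simp add: divide_le_eq)
qed

lemma exists_dense_box_free:
  assumes "2 \<le> k" "4 \<le> m"
  shows "\<exists>E \<subseteq> transversals k m. box_free k m E \<and>
    real m powr (real k - 2 * real k / (3 ^ k - 1)) / 8 \<le> real (card E)"
proof -
  define \<alpha> where "\<alpha> = 2 * real k / (3 ^ k - 1)"
  define p where "p = real m powr (- \<alpha>) / 2"
  have "(3::real) ^ 2 \<le> 3 ^ k" using assms(1) by (intro power_increasing) auto
  then have three_pow: "8 \<le> (3::real) ^ k - 1" by simp
  have \<alpha>: "0 < \<alpha>" "\<alpha> \<le> real k - 1"
    using assms(1) three_pow density_exponent_le by (auto simp: \<alpha>_def)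
  have \<alpha>_mult: "\<alpha> * real (3 ^ k - 1) = 2 * real k"
    using three_pow by (simp add: \<alpha>_def of_nat_diff)
  have m: "0 < real m" using assms(2) by simp
  have p: "0 < p" "p \<le> 1"
    using m \<alpha> powr_mono[of "- \<alpha>" 0 "real m"] assms(2) by (auto simp: p_def)
  have "(real m powr (- \<alpha>)) ^ (3 ^ k - 1) = real m powr (- \<alpha> * real (3 ^ k - 1))"
    using m by (simp add: powr_realpow[symmetric] powr_powr)
  also have "\<dots> = real m powr (real k) / real m powr (real (3 * k))"
    using \<alpha>_mult by (simp add: powr_diff[symmetric])
  moreover have "real m powr real (3 * k) = real m ^ (3 * k)" using m by (rule powr_realpow)
  ultimately have "real m ^ (3 * k) * p ^ (3 ^ k - 1) = real m ^ k / 2 ^ (3 ^ k - 1)"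
    using m by (simp add: p_def power_divide powr_realpow)
  also have "\<dots> \<le> real m ^ k / 2"
  proof -
    have "(3::nat) ^ 2 \<le> 3 ^ k" using assms(1) by (intro power_increasing) auto
    then have "(2::real) ^ 1 \<le> 2 ^ (3 ^ k - 1)" by (intro power_increasing) auto
    then show ?thesis using m by (intro divide_left_mono) auto
  qed
  finally have "real m ^ (3 * k) * p ^ (3 ^ k - 1) \<le> real m ^ k / 2" .
  then obtain E where E: "E \<subseteq> transversals k m" "box_free k m E"
    "(real m ^ k * p - 1) / 2 \<le> real (card E)"
    using exists_box_free_of_density[of m p k] p assms(2) by auto
  have "real m ^ k * p = real m powr (real k - \<alpha>) / 2"
    using m by (simp add: p_def powr_diff powr_minus powr_realpow field_simps)
  moreover have "4 \<le> real m powr (real k - \<alpha>)"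
    using powr_mono[of 1 "real k - \<alpha>" "real m"] \<alpha> assms(2) by simp
  ultimately show ?thesis using E unfolding \<alpha>_def by (intro exI[of _ E]) auto
qed

definition slice :: "nat \<Rightarrow> (nat \<times> nat) set \<Rightarrow> nat set" where
  "slice i F = {j. (i, j) \<in> F}"

lemma join_cx_iff: "F \<in> join_cx s ns Ks \<longleftrightarrow> F \<subseteq> join_verts s ns \<and> (\<forall>i<s. slice i F \<in> Ks i)"
  by (simp add: join_cx_def slice_def)

lemma finite_join_verts: "finite (join_verts s ns)"
proof -
  have "join_verts s ns = (SIGMA i:{..<s}. {..<ns i})" by (auto simp: join_verts_def)
  then show ?thesis by simp
qed

lemma slice_subset: "F \<subseteq> join_verts s ns \<Longrightarrow> slice i F \<subseteq> {0..<ns i}"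
  by (auto simp: slice_def join_verts_def)

lemma finite_slice: "F \<subseteq> join_verts s ns \<Longrightarrow> finite (slice i F)"
  using finite_subset[OF slice_subset] by blast

lemma card_eq_sum_card_slice:
  assumes "F \<subseteq> join_verts s ns"
  shows "card F = (\<Sum>i<s. card (slice i F))"
proof -
  have "F = (\<Union>i<s. Pair i ` slice i F)"
    using assms by (auto simp: slice_def join_verts_def)
  also have "card \<dots> = (\<Sum>i<s. card (Pair i ` slice i F))"
    by (rule card_UN_disjoint) (auto simp: finite_slice[OF assms])
  also have "\<dots> = (\<Sum>i<s. card (slice i F))"
    by (intro sum.cong refl card_image) (auto simp: inj_on_def)
  finally show ?thesis .
qed

lemma obtain_join_of_slices:
  assumes "\<And>i. i < s \<Longrightarrow> G i \<subseteq> {0..<ns i}"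
  obtains F where "F \<subseteq> join_verts s ns" "\<And>i. i < s \<Longrightarrow> slice i F = G i"
proof
  show "(\<Union>i<s. Pair i ` G i) \<subseteq> join_verts s ns"
    using assms by (auto simp: join_verts_def) (meson assms atLeastLessThan_iff subsetD)
  show "slice i (\<Union>i<s. Pair i ` G i) = G i" if "i < s" for i
    using that by (auto simp: slice_def)
qed

locale nice_join =
  fixes s :: nat and ns :: "nat \<Rightarrow> nat" and Ks :: "nat \<Rightarrow> nat set set" and d :: nat
  assumes nice_factor: "\<And>i. i < s \<Longrightarrow> nice (ns i) (Ks i)"
    and cx_dim_join: "cx_dim (join_cx s ns Ks) = d"
    and sum_ns: "(\<Sum>i<s. ns i) = 2 * d + s + 2"
    and d_pos: "1 \<le> d"
begin

definition rank :: "nat \<Rightarrow> nat" where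
  "rank i = Max (card ` Ks i)"

lemma factor_subset: "i < s \<Longrightarrow> Ks i \<subseteq> Pow {0..<ns i}"
  using nice_factor by (simp add: nice_def simplicial_complex_def)

lemma factor_nice: "i < s \<Longrightarrow> F \<subseteq> {0..<ns i} \<Longrightarrow> (F \<in> Ks i) \<noteq> ({0..<ns i} - F \<in> Ks i)"
  using nice_factor unfolding nice_def by blast

lemma finite_factor: "i < s \<Longrightarrow> finite (Ks i)"
  using factor_subset finite_subset by blast

lemma card_le_rank: "i < s \<Longrightarrow> G \<in> Ks i \<Longrightarrow> card G \<le> rank i"
  unfolding rank_def using finite_factor by simp

lemma rank_attained: "i < s \<Longrightarrow> \<exists>G\<in>Ks i. card G = rank i"
proof -
  assume i: "i < s"
  then have "Ks i \<noteq> {}" using nice_factor by (simp add: nice_def simplicial_complex_def)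
  then have "rank i \<in> card ` Ks i" unfolding rank_def using finite_factor[OF i] by (intro Max_in) auto
  then show ?thesis by auto
qed

lemma sum_rank: "(\<Sum>i<s. rank i) = d + 1"
proof -
  obtain G where G: "\<And>i. i < s \<Longrightarrow> G i \<in> Ks i \<and> card (G i) = rank i"
    using rank_attained by metis
  then obtain F where F: "F \<subseteq> join_verts s ns" "\<And>i. i < s \<Longrightarrow> slice i F = G i"
    using factor_subset by (metis PowD subsetD obtain_join_of_slices)
  have "Max (card ` join_cx s ns Ks) = (\<Sum>i<s. rank i)"
  proof (rule Max_eqI)
    show "finite (card ` join_cx s ns Ks)"
      using finite_join_verts by (auto intro: finite_subset[of _ "Pow (join_verts s ns)"] simp: join_cx_def)
    show "y \<le> (\<Sum>i<s. rank i)" if "y \<in> card ` join_cx s ns Ks" for y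
      using that by (auto simp: join_cx_iff card_eq_sum_card_slice card_le_rank intro!: sum_mono)
    show "(\<Sum>i<s. rank i) \<in> card ` join_cx s ns Ks"
      using F G by (auto simp: join_cx_iff card_eq_sum_card_slice intro!: image_eqI[of _ _ F])
  qed
  then show ?thesis using cx_dim_join d_pos by (simp add: cx_dim_def)
qed

text \<open>Niceness of \<open>K\<^sub>i\<close> forbids both a set of \<open>rank i + 1\<close> vertices and its
  complement, so \<open>ns i \<le> 2 * rank i + 1\<close>; the vertex count \<open>sum_ns\<close> forces equality.\<close>

lemma ns_le_rank: "i < s \<Longrightarrow> ns i \<le> 2 * rank i + 1"
proof (rule ccontr)
  assume i: "i < s" and "\<not> ns i \<le> 2 * rank i + 1"
  then have big: "2 * rank i + 2 \<le> ns i" by simp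
  define F where "F = {0..<Suc (rank i)}"
  have F: "F \<subseteq> {0..<ns i}" using big by (auto simp: F_def)
  have "F \<notin> Ks i" using card_le_rank[OF i, of F] by (auto simp: F_def)
  moreover have "{0..<ns i} - F \<notin> Ks i"
  proof
    assume "{0..<ns i} - F \<in> Ks i"
    then have "card ({0..<ns i} - F) \<le> rank i" by (rule card_le_rank[OF i])
    moreover have "card ({0..<ns i} - F) = ns i - Suc (rank i)"
      using F by (simp add: card_Diff_subset F_def)
    ultimately show False using big by simp
  qed
  ultimately show False using factor_nice[OF i F] by simp
qed

lemma ns_eq_rank: "i < s \<Longrightarrow> ns i = 2 * rank i + 1"
proof (rule ccontr)
  assume i: "i < s" and "ns i \<noteq> 2 * rank i + 1"
  then have "ns i < 2 * rank i + 1" using ns_le_rank[OF i] by simp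
  then have "(\<Sum>i<s. ns i) < (\<Sum>i<s. 2 * rank i + 1)"
    using i ns_le_rank by (intro sum_strict_mono_ex1) auto
  also have "\<dots> = 2 * (\<Sum>i<s. rank i) + s"
    unfolding sum.distrib by (simp add: sum_distrib_left)
  finally show False using sum_rank sum_ns by simp
qed

lemma mem_factor_iff:
  assumes i: "i < s" and G: "G \<subseteq> {0..<ns i}"
  shows "G \<in> Ks i \<longleftrightarrow> card G \<le> rank i"
proof
  assume "card G \<le> rank i"
  moreover have "card ({0..<ns i} - G) = ns i - card G"
    using G by (simp add: card_Diff_subset finite_subset)
  ultimately have "rank i < card ({0..<ns i} - G)" using ns_eq_rank[OF i] by simp
  then have "{0..<ns i} - G \<notin> Ks i" using card_le_rank[OF i] by (meson not_le)
  then show "G \<in> Ks i" using factor_nice[OF i G] by simp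
qed (rule card_le_rank[OF i])

definition top_simplices :: "(nat \<times> nat) set set" where
  "top_simplices = {F \<in> join_cx s ns Ks. card F = d + 1}"

lemma top_simplex_subset: "F \<in> top_simplices \<Longrightarrow> F \<subseteq> join_verts s ns"
  by (simp add: top_simplices_def join_cx_iff)

lemma card_slice_le_rank: "F \<in> top_simplices \<Longrightarrow> i < s \<Longrightarrow> card (slice i F) \<le> rank i"
  by (simp add: top_simplices_def join_cx_iff card_le_rank)

lemma top_simplexI:
  assumes "F \<subseteq> join_verts s ns" "\<And>i. i < s \<Longrightarrow> card (slice i F) \<le> rank i" "card F = d + 1"
  shows "F \<in> top_simplices"
  using assms by (simp add: top_simplices_def join_cx_iff mem_factor_iff slice_subset)

lemma vertex_of_top_simplex:
  assumes "F \<in> top_simplices" "(i, a) \<in> F"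
  shows "i < s" "a < ns i" "1 \<le> rank i"
proof -
  show "i < s" "a < ns i" using assms top_simplex_subset by (auto simp: join_verts_def)
  have "slice i F \<noteq> {}" using assms(2) by (auto simp: slice_def)
  then show "1 \<le> rank i"
    using card_slice_le_rank[OF assms(1) \<open>i < s\<close>] finite_slice[OF top_simplex_subset[OF assms(1)]]
    by (metis One_nat_def Suc_leI card_gt_0_iff le_trans)
qed

lemma extend_to_top_simplex:
  assumes "X \<subseteq> join_verts s ns" "\<And>i. i < s \<Longrightarrow> card (slice i X) \<le> rank i"
  shows "\<exists>F\<in>top_simplices. X \<subseteq> F"
proof -
  have "\<exists>G. slice i X \<subseteq> G \<and> G \<subseteq> {0..<ns i} \<and> card G = rank i" if "i < s" for i
    using assms(2)[OF that] ns_eq_rank[OF that] slice_subset[OF assms(1), of i]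
    by (intro exists_subset_between) simp_all
  then obtain G where G: "\<And>i. i < s \<Longrightarrow> slice i X \<subseteq> G i \<and> G i \<subseteq> {0..<ns i} \<and> card (G i) = rank i"
    by metis
  then obtain F where F: "F \<subseteq> join_verts s ns" "\<And>i. i < s \<Longrightarrow> slice i F = G i"
    by (metis obtain_join_of_slices)
  have "F \<in> top_simplices"
    using F G sum_rank by (intro top_simplexI) (auto simp: card_eq_sum_card_slice)
  moreover have "X \<subseteq> F"
  proof
    fix v assume "v \<in> X"
    moreover obtain a b where v: "v = (a, b)" by (cases v)
    ultimately have "a < s" "b \<in> slice a X"
      using assms(1) by (auto simp: slice_def join_verts_def)
    then have "b \<in> slice a F" using F(2) G by blast
    then show "v \<in> F" using v by (simp add: slice_def)
  qed
  ultimately show ?thesis by blast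
qed

lemma top_simplex_exists: "\<exists>F. F \<in> top_simplices"
  using extend_to_top_simplex[of "{}"] by (auto simp: slice_def)

lemma vertex_in_top_simplex:
  assumes "i < s" "a < ns i" "1 \<le> rank i"
  shows "\<exists>F\<in>top_simplices. (i, a) \<in> F"
proof -
  have "card (slice j {(i, a)}) \<le> rank j" for j
    using assms by (cases "j = i") (auto simp: slice_def)
  then show ?thesis
    using extend_to_top_simplex[of "{(i, a)}"] assms by (auto simp: join_verts_def)
qed

lemma pair_in_top_simplex:
  assumes "i < s" "a < ns i" "1 \<le> rank i" "i' < s" "b < ns i'" "1 \<le> rank i'"
    and "i = i' \<Longrightarrow> 2 \<le> rank i"
  shows "\<exists>F\<in>top_simplices. (i, a) \<in> F \<and> (i', b) \<in> F"
proof -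
  have "card (slice j {(i, a), (i', b)}) \<le> rank j" for j
  proof -
    have "slice j {(i, a), (i', b)} = (if j = i then {a} else {}) \<union> (if j = i' then {b} else {})"
      by (auto simp: slice_def)
    then show ?thesis using assms by (auto simp: card_insert_if)
  qed
  then show ?thesis
    using extend_to_top_simplex[of "{(i, a), (i', b)}"] assms by (auto simp: join_verts_def)
qed

definition rainbow :: "(nat \<times> nat \<Rightarrow> nat) \<Rightarrow> bool" where
  "rainbow \<chi> \<longleftrightarrow> (\<forall>F\<in>top_simplices. bij_betw \<chi> F {..<d + 1})"

lemma rainbow_colour_in:
  assumes "rainbow \<chi>" "F \<in> top_simplices" "F' \<in> top_simplices" "v \<in> F'"
  shows "\<exists>u\<in>F. \<chi> u = \<chi> v"
proof -
  have "\<chi> v \<in> {..<d + 1}" using assms bij_betwE unfolding rainbow_def by blast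
  then show ?thesis using assms(1,2) unfolding rainbow_def bij_betw_def by (metis imageE)
qed

lemma rainbow_inj:
  assumes "rainbow \<chi>" "F \<in> top_simplices" "u \<in> F" "v \<in> F" "\<chi> u = \<chi> v"
  shows "u = v"
  using assms unfolding rainbow_def bij_betw_def by (meson inj_onD)

text \<open>Any vertex outside a top simplex \<open>F\<close> shares its colour with some vertex of \<open>F\<close>,
  and the two can then lie in no common top simplex; this pins down the factors.\<close>

lemma rainbow_rank_le_one:
  assumes rainbow: "rainbow \<chi>" and i: "i < s"
  shows "rank i \<le> 1"
proof (rule ccontr)
  assume "\<not> rank i \<le> 1"
  then have two: "2 \<le> rank i" by simp
  obtain F0 where F0: "F0 \<in> top_simplices" using top_simplex_exists by blast
  have "\<not> {0..<ns i} \<subseteq> slice i F0"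
  proof
    assume "{0..<ns i} \<subseteq> slice i F0"
    then have "card {0..<ns i} \<le> card (slice i F0)"
      by (rule card_mono[OF finite_slice[OF top_simplex_subset[OF F0]]])
    then show False using card_slice_le_rank[OF F0 i] ns_eq_rank[OF i] two by simp
  qed
  then obtain a where a: "a < ns i" "(i, a) \<notin> F0" by (auto simp: slice_def subset_eq)
  obtain F where "F \<in> top_simplices" "(i, a) \<in> F"
    using vertex_in_top_simplex[OF i a(1)] two by auto
  then obtain u where u: "u \<in> F0" "\<chi> u = \<chi> (i, a)"
    using rainbow_colour_in[OF rainbow F0] by blast
  obtain i' b where ub: "u = (i', b)" by (cases u)
  have "i' < s" "b < ns i'" "1 \<le> rank i'"
    using vertex_of_top_simplex[OF F0] u(1) ub by auto
  then obtain F' where "F' \<in> top_simplices" "(i', b) \<in> F'" "(i, a) \<in> F'"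
    using pair_in_top_simplex[of i' b i a] i a(1) two by auto
  then have "(i', b) = (i, a)" using rainbow_inj[OF rainbow] u(2) ub by blast
  then show False using u(1) ub a(2) by simp
qed

lemma rainbow_colour_const:
  assumes rainbow: "rainbow \<chi>" and i: "i < s" "rank i = 1" and ab: "a < ns i" "b < ns i"
  shows "\<chi> (i, a) = \<chi> (i, b)"
proof -
  obtain F where F: "F \<in> top_simplices" "(i, a) \<in> F"
    using vertex_in_top_simplex[OF i(1) ab(1)] i(2) by auto
  obtain Fb where "Fb \<in> top_simplices" "(i, b) \<in> Fb"
    using vertex_in_top_simplex[OF i(1) ab(2)] i(2) by auto
  then obtain u where u: "u \<in> F" "\<chi> u = \<chi> (i, b)"
    using rainbow_colour_in[OF rainbow F(1)] by blast
  obtain i' c where uc: "u = (i', c)" by (cases u)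
  have "i' = i"
  proof (rule ccontr)
    assume ne: "i' \<noteq> i"
    have "i' < s" "c < ns i'" "1 \<le> rank i'"
      using vertex_of_top_simplex[OF F(1)] u(1) uc by auto
    then obtain F' where "F' \<in> top_simplices" "(i', c) \<in> F'" "(i, b) \<in> F'"
      using pair_in_top_simplex[of i' c i b] i ab(2) ne by auto
    then have "(i', c) = (i, b)" using rainbow_inj[OF rainbow] u(2) uc by blast
    then show False using ne by simp
  qed
  then have "c \<in> slice i F" "a \<in> slice i F" using u(1) uc F(2) by (auto simp: slice_def)
  moreover have "card (slice i F) \<le> Suc 0" using card_slice_le_rank[OF F(1) i(1)] i(2) by simp
  ultimately have "c = a"
    using finite_slice[OF top_simplex_subset[OF F(1)]] card_le_Suc0_iff_eq by blast
  then show ?thesis using u(2) uc \<open>i' = i\<close> by simp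
qed

lemma rainbow_bij_betw_parts:
  assumes rainbow: "rainbow \<chi>"
  shows "bij_betw (\<lambda>i. \<chi> (i, 0)) {i. i < s \<and> rank i = 1} {..<d + 1}"
proof -
  let ?P = "{i. i < s \<and> rank i = 1}"
  have "(\<Sum>i<s. rank i) = (\<Sum>i<s. of_bool (rank i = 1))"
    using rainbow_rank_le_one[OF rainbow] by (intro sum.cong) (auto simp: le_Suc_eq)
  also have "\<dots> = card ?P"
    by (simp add: Int_def conj_commute)
  finally have card_P: "card ?P = d + 1" using sum_rank by simp
  have "inj_on (\<lambda>i. \<chi> (i, 0)) ?P"
  proof (rule inj_onI, rule ccontr)
    fix i i' assume i: "i \<in> ?P" and i': "i' \<in> ?P" and eq: "\<chi> (i, 0) = \<chi> (i', 0)" and "i \<noteq> i'"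
    then obtain F where "F \<in> top_simplices" "(i, 0) \<in> F" "(i', 0) \<in> F"
      using pair_in_top_simplex[of i 0 i' 0] ns_eq_rank by auto
    then show False using rainbow_inj[OF rainbow] eq \<open>i \<noteq> i'\<close> by blast
  qed
  moreover have "\<chi> (i, 0) \<in> {..<d + 1}" if i: "i \<in> ?P" for i
  proof -
    obtain F where "F \<in> top_simplices" "(i, 0) \<in> F"
      using i vertex_in_top_simplex[of i 0] ns_eq_rank[of i] by auto
    then show ?thesis using rainbow bij_betwE unfolding rainbow_def by blast
  qed
  moreover have "card ((\<lambda>i. \<chi> (i, 0)) ` ?P) = card {..<d + 1}"
    using calculation(1) card_P by (simp add: card_image)
  ultimately show ?thesis
    unfolding bij_betw_def by (intro conjI card_subset_eq) auto
qed

lemma rainbow_of_embedding: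
  assumes "E \<subseteq> transversals (d + 1) m" "inj_on f (join_verts s ns)"
    and "\<And>F. F \<in> top_simplices \<Longrightarrow> f ` F \<in> E"
  shows "rainbow (\<lambda>v. f v div m)"
  unfolding rainbow_def
proof
  fix F assume F: "F \<in> top_simplices"
  have "bij_betw f F (f ` F)"
    using inj_on_subset[OF assms(2) top_simplex_subset[OF F]] by (simp add: bij_betw_imageI)
  moreover have "bij_betw (\<lambda>x. x div m) (f ` F) {..<d + 1}"
    using assms(1) assms(3)[OF F] by (intro transversal_bij_betw_div) blast
  ultimately have "bij_betw ((\<lambda>x. x div m) \<circ> f) F {..<d + 1}" by (rule bij_betw_trans)
  then show "bij_betw (\<lambda>v. f v div m) F {..<d + 1}" by (simp add: comp_def)
qed

definition part_of_colour :: "(nat \<times> nat \<Rightarrow> nat) \<Rightarrow> nat \<Rightarrow> nat" where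
  "part_of_colour \<chi> = the_inv_into {i. i < s \<and> rank i = 1} (\<lambda>i. \<chi> (i, 0))"

lemma rainbow_part_of_colour:
  assumes rainbow: "rainbow \<chi>" and j: "j < d + 1"
  shows "part_of_colour \<chi> j < s" "rank (part_of_colour \<chi> j) = 1" "ns (part_of_colour \<chi> j) = 3"
    and "\<And>a. a < 3 \<Longrightarrow> \<chi> (part_of_colour \<chi> j, a) = j"
proof -
  note bij = rainbow_bij_betw_parts[OF rainbow]
  have "part_of_colour \<chi> j \<in> {i. i < s \<and> rank i = 1}"
    using bij_betw_apply[OF bij_betw_the_inv_into[OF bij]] j by (simp add: part_of_colour_def)
  then show i: "part_of_colour \<chi> j < s" "rank (part_of_colour \<chi> j) = 1"
    and ns: "ns (part_of_colour \<chi> j) = 3" using ns_eq_rank by auto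
  have "\<chi> (part_of_colour \<chi> j, 0) = j"
    using f_the_inv_into_f_bij_betw[OF bij] j by (simp add: part_of_colour_def)
  then show "\<chi> (part_of_colour \<chi> j, a) = j" if "a < 3" for a
    using rainbow_colour_const[OF rainbow i, of a 0] ns that by simp
qed

lemma top_simplex_of_rainbow_transversal:
  assumes f: "inj_on f (join_verts s ns)" and rainbow: "rainbow (\<lambda>v. f v div m)"
    and e: "e \<in> transversals (d + 1) m" "e \<subseteq> f ` {v \<in> join_verts s ns. rank (fst v) = 1}"
  shows "\<exists>F\<in>top_simplices. f ` F = e"
proof
  define F where "F = {v \<in> join_verts s ns. rank (fst v) = 1 \<and> f v \<in> e}"
  show fF: "f ` F = e" using e(2) by (auto simp: F_def)
  show "F \<in> top_simplices"
  proof (rule top_simplexI)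
    show F_sub: "F \<subseteq> join_verts s ns" by (auto simp: F_def)
    show "card F = d + 1"
      using card_image[OF inj_on_subset[OF f F_sub]] fF card_transversal[OF e(1)] by simp
    fix i assume i: "i < s"
    show "card (slice i F) \<le> rank i"
    proof (cases "rank i = 1")
      case False
      then show ?thesis by (simp add: slice_def F_def)
    next
      case True
      have "a = b" if "a \<in> slice i F" "b \<in> slice i F" for a b
      proof -
        have ab: "(i, a) \<in> join_verts s ns" "(i, b) \<in> join_verts s ns" "f (i, a) \<in> e" "f (i, b) \<in> e"
          using that by (auto simp: slice_def F_def)
        moreover have "a < ns i" "b < ns i" using ab(1,2) by (simp_all add: join_verts_def)
        ultimately have "f (i, a) div m = f (i, b) div m"
          using rainbow_colour_const[OF rainbow i True \<open>a < ns i\<close> \<open>b < ns i\<close>] by simp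
        then have "f (i, a) = f (i, b)"
          using transversal_bij_betw_div[OF e(1)] ab(3,4) by (simp add: bij_betw_def inj_on_def)
        then show "a = b" using f ab(1,2) by (auto dest: inj_onD)
      qed
      then show ?thesis
        using True finite_slice[OF F_sub] by (simp add: card_le_Suc0_iff_eq)
    qed
  qed
qed

text \<open>The colour classes of the \<open>d + 1\<close> three-point factors span a box, each of whose
  edges comes from a top simplex.\<close>

lemma box_of_embedding:
  assumes m: "0 < m" and E: "E \<subseteq> transversals (d + 1) m"
    and f: "inj_on f (join_verts s ns)" and top: "\<And>F. F \<in> top_simplices \<Longrightarrow> f ` F \<in> E"
  shows "\<exists>T\<in>boxes (d + 1) m. box_edges (d + 1) m T \<subseteq> E"
proof -
  have rainbow: "rainbow (\<lambda>v. f v div m)" using rainbow_of_embedding[OF E f top] .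
  define part where "part = part_of_colour (\<lambda>v. f v div m)"
  note part = rainbow_part_of_colour[OF rainbow, folded part_def]
  define T where "T = (\<lambda>j\<in>{..<d + 1}. f ` Pair (part j) ` {..<3})"
  have T_sub: "T j \<subseteq> f ` {v \<in> join_verts s ns. rank (fst v) = 1}" if "j < d + 1" for j
    using part[OF that] that by (auto simp: T_def join_verts_def)
  have "T \<in> boxes (d + 1) m"
    unfolding boxes_def
  proof (rule PiE_I)
    fix j assume j: "j \<in> {..<d + 1}"
    have "inj_on f (Pair (part j) ` {..<3})"
      using part(1,3)[of j] j by (intro inj_on_subset[OF f]) (auto simp: join_verts_def)
    then have "card (T j) = 3" using j by (simp add: T_def card_image inj_on_def)
    moreover have "T j \<subseteq> block m j"
      using part(4)[of j] j m by (auto simp: T_def mem_block_iff)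
    ultimately show "T j \<in> {S. S \<subseteq> block m j \<and> card S = 3}" by simp
  qed (simp add: T_def)
  moreover have "box_edges (d + 1) m T \<subseteq> E"
  proof
    fix e assume "e \<in> box_edges (d + 1) m T"
    then have e: "e \<in> transversals (d + 1) m" by (simp add: box_edges_def)
    have "e \<subseteq> (\<Union>j<d + 1. T j)" using \<open>e \<in> box_edges (d + 1) m T\<close> by (simp add: box_edges_def)
    also have "\<dots> \<subseteq> f ` {v \<in> join_verts s ns. rank (fst v) = 1}"
      using T_sub by blast
    finally obtain F where "F \<in> top_simplices" "f ` F = e"
      using top_simplex_of_rainbow_transversal[OF f rainbow e] by blast
    then show "e \<in> E" using top by blast
  qed
  ultimately show ?thesis by blast
qed

end

lemma family_free_if_box_free:
  assumes "1 \<le> d" "0 < m" "E \<subseteq> transversals (d + 1) m" "box_free (d + 1) m E"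
  shows "family_free (V, E) (F_fam d)"
  unfolding family_free_def
proof (intro ballI notI)
  fix H assume "H \<in> F_fam d" "contains_copy (V, E) H"
  then obtain s ns Ks f where H: "\<forall>i<s. nice (ns i) (Ks i)" "cx_dim (join_cx s ns Ks) = d"
      "(\<Sum>i<s. ns i) = 2 * d + s + 2"
    and f: "inj_on f (join_verts s ns)"
      "\<And>F. F \<in> join_cx s ns Ks \<Longrightarrow> card F = d + 1 \<Longrightarrow> f ` F \<in> E"
    unfolding F_fam_def contains_copy_def skel_def by auto
  interpret nice_join s ns Ks d using H assms(1) by unfold_locales auto
  show False
    using box_of_embedding[OF assms(2,3) f(1)] f(2) assms(4)
    unfolding top_simplices_def box_free_def by blast
qed

lemma ex_num_ge:
  assumes "is_kgraph k ({0..<n}, E)" "family_free ({0..<n}, E) \<F>"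
  shows "card E \<le> ex_num k n \<F>"
proof -
  let ?S = "{card E | E. is_kgraph k ({0..<n}, E) \<and> family_free ({0..<n}, E) \<F>}"
  have "?S \<subseteq> card ` Pow (Pow {0..<n})" by (auto simp: is_kgraph_def)
  then have "finite ?S" by (rule finite_subset) simp
  moreover have "card E \<in> ?S" using assms by blast
  ultimately show ?thesis unfolding ex_num_def by (rule Max_ge)
qed

lemma is_kgraph_transversals:
  assumes "E \<subseteq> transversals k m" "k * m \<le> n"
  shows "is_kgraph k ({0..<n}, E)"
  unfolding is_kgraph_def
proof (intro conjI ballI)
  fix e assume "e \<in> snd ({0..<n}, E)"
  then have e: "e \<in> transversals k m" using assms(1) by auto
  then show "e \<subseteq> fst ({0..<n}, E)" using assms(2) by (auto simp: transversals_def)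
  show "card e = k" using e by (rule card_transversal)
qed simp

lemma nat_div_ge_half_ratio:
  assumes "0 < k" "k \<le> n"
  shows "real n / (2 * real k) \<le> real (n div k)"
proof -
  have "k * (n div k) + n mod k = n" "n mod k < k" using assms(1) by simp_all
  moreover have "k * 1 \<le> k * (n div k)" using assms by (intro mult_le_mono2) (simp add: Suc_le_eq div_greater_zero_iff)
  ultimately have "real n \<le> real (2 * (k * (n div k)))" by linarith
  then show ?thesis using assms(1) by (simp add: divide_le_eq mult.commute mult.left_commute)
qed

lemma ex_num_F_fam_ge:
  fixes d n :: nat
  defines "k \<equiv> d + 1"
  defines "\<beta> \<equiv> real k - 2 * real k / (3 ^ k - 1)"
  assumes d: "1 \<le> d" and n: "4 * k \<le> n"
  shows "real n powr \<beta> / (8 * (2 * real k) powr \<beta>) \<le> real (ex_num k n (F_fam d))"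
proof -
  have k: "2 \<le> k" using d by (simp add: k_def)
  define m where "m = n div k"
  have "4 * k div k \<le> m" unfolding m_def using n by (rule div_le_mono)
  then have "4 \<le> m" using k by simp
  then obtain E where E: "E \<subseteq> transversals k m" "box_free k m E" "real m powr \<beta> / 8 \<le> real (card E)"
    using exists_dense_box_free[OF k] unfolding \<beta>_def by blast
  have "family_free ({0..<n}, E) (F_fam d)"
    using family_free_if_box_free[OF d, of m E "{0..<n}"] E \<open>4 \<le> m\<close> by (simp add: k_def)
  moreover have "is_kgraph k ({0..<n}, E)"
    using is_kgraph_transversals[OF E(1)] by (simp add: m_def)
  ultimately have "card E \<le> ex_num k n (F_fam d)" by (rule ex_num_ge[rotated])
  moreover have "(real n / (2 * real k)) powr \<beta> \<le> real m powr \<beta>"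
    using nat_div_ge_half_ratio[of k n] density_exponent_le[OF k] n k
    by (intro powr_mono2) (auto simp: m_def \<beta>_def)
  then have "real n powr \<beta> / (2 * real k) powr \<beta> / 8 \<le> real m powr \<beta> / 8"
    using k by (simp add: powr_divide)
  ultimately show ?thesis using E(3) by (simp add: mult.commute)
qed

theorem corollary3p17:
  fixes d :: nat
  assumes "d \<ge> 1"
  shows "\<exists>C>0. \<exists>N::nat. \<forall>n\<ge>N.
    real (ex_num (d + 1) n (F_fam d)) \<ge>
      C * real n powr (real d + 1 - 2 * (real d + 1) / ((3::real) ^ (d + 1) - 1))"
proof -
  define \<beta> where "\<beta> = real d + 1 - 2 * (real d + 1) / ((3::real) ^ (d + 1) - 1)"
  define C where "C = 1 / (8 * (2 * (real d + 1)) powr \<beta>)"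
  have "C * real n powr \<beta> \<le> real (ex_num (d + 1) n (F_fam d))" if "4 * (d + 1) \<le> n" for n
    using ex_num_F_fam_ge[OF assms that] by (simp add: C_def \<beta>_def add.commute)
  moreover have "0 < C" by (simp add: C_def)
  ultimately show ?thesis unfolding \<beta>_def by blast
qed

end
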